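(* Let $n\ge2$ and let $Q$ be the $2n\times 2n$ matrix with entries given by $Q_{ij}=0$ if $i+j<2n+1$, $Q_{ij}=q^{n(n+e-3)-e}(q-1+\delta_{i+j,2n+1})q^j$ if $i+j\ge 2n+1$ and $j\le n$, and $Q_{ij}=q^{n(n+e-3)-e}\big((q-1+\delta_{i+j,2n+1})q^{j+e-1}+\delta_{ij}q^n(q^e-q)\big)$ if $i+j\ge2n+1$ and $j>n$ (the quotient matrix of the opposition graph on maximal flags of $\mathrm{PS}(n,e,q)$ with respect to types relative to a fixed point). For $i\in[n]$ let $$v_i=(\underbrace{0,\dots,0}_{n-i},\underbrace{q^{e+i-1},\dots,q^{e+i-1}}_{i},\underbrace{-1,\dots,-1}_{i},\underbrace{0,\dots,0}_{n-i})^\top.$$ Then $v_i$ is an eigenvector of $Q$ with eigenvalue $-q^{(n-1)(n-1+e)}$.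
   Context: $\delta$ is the Kronecker delta; $e$ is a real parameter (in applications $e\in\{0,\frac12,1,\frac32,2\}$) and $q$ a prime power. *)

theory Defs
  imports "Jordan_Normal_Form.Char_Poly" "HOL-Computational_Algebra.Primes"
begin

definition kdelta :: "nat \<Rightarrow> nat \<Rightarrow> real" where
  "kdelta a b = (if a = b then 1 else 0)"

text \<open>The 2n x 2n quotient matrix Q. JNF matrices are 0-indexed, so the entry
  at position (a,b) is Q_{ij} with i = a+1, j = b+1.\<close>
definition Qmat :: "nat \<Rightarrow> real \<Rightarrow> real \<Rightarrow> real mat" where
  "Qmat n e q = mat (2*n) (2*n) (\<lambda>(a,b).
     let i = a + 1; j = b + 1;
         C = q powr (real n * (real n + e - 3) - e);
         d = kdelta (i + j) (2*n + 1)
     in if i + j < 2*n + 1 then 0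
        else if j \<le> n then C * ((q - 1 + d) * q ^ j)
        else C * ((q - 1 + d) * q powr (real j + e - 1)
                  + kdelta i j * q ^ n * (q powr e - q)))"

definition vvec :: "nat \<Rightarrow> real \<Rightarrow> real \<Rightarrow> nat \<Rightarrow> real vec" where
  "vvec n e q i = vec (2*n) (\<lambda>a.
     let k = a + 1
     in if k \<le> n - i then 0
        else if k \<le> n then q powr (e + real i - 1)
        else if k \<le> n + i then -1
        else 0)"

end

theory Submission
  imports Defs
begin

text \<open>
  Up to the common factor C = q^(n(n+e-3)-e), row a of Q is supported on the columns
  b \<ge> s = 2n-1-a (0-indexed), where the entry is (q - 1 + \<delta>_bs) q^(b+1) in the left half and
  (q - 1 + \<delta>_bs) q^(b+e) in the right half, plus a diagonal term q^n (q^e - q) there.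
  The vector v_i is constant on each of the two column blocks [n-i, n) and [n, n+i), and on
  such a block the sum of (q - 1 + \<delta>_bs) q^b over b \<ge> s telescopes to a difference of at most
  two powers of q. Comparing a with the support of v_i leaves four cases; in each one the
  powers cancel or collapse to -q^((n-1)(n-1+e)) times the entry of v_i, the diagonal term
  supplying exactly the missing powers when n \<le> a < n+i.
\<close>

lemma sum_telescoping_powr_tail:
  fixes q c :: real
  assumes "q > 0" and "lo \<le> hi"
  shows "(\<Sum>b\<in>{lo..<hi}. if s \<le> b then (q - 1 + kdelta b s) * q powr (real b + c) else 0)
       = (if s < lo then q powr (real hi + c) - q powr (real lo + c)
          else if s < hi then q powr (real hi + c) else 0)"
  using assms(2)
proof (induction hi rule: dec_induct)
  case base
  then show ?case by simp
next
  case (step m)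
  have "q powr (real (Suc m) + c) = q * q powr (real m + c)"
    using assms(1) by (simp add: powr_add add.commute add.left_commute)
  with step show ?case
    by (auto simp: kdelta_def algebra_simps)
qed

lemma Qmat_index_left:
  assumes "q > 0" and "a < 2*n" and "b < n"
  shows "Qmat n e q $$ (a, b) = q powr (real n * (real n + e - 3) - e) *
     (if 2*n - 1 - a \<le> b then (q - 1 + kdelta b (2*n - 1 - a)) * q powr (real b + 1) else 0)"
proof -
  have "q ^ (b + 1) = q powr (real b + 1)"
    using assms(1) by (simp add: powr_add powr_realpow)
  with assms show ?thesis by (auto simp: Qmat_def Let_def kdelta_def)
qed

lemma Qmat_index_right:
  assumes "a < 2*n" and "n \<le> b" and "b < 2*n"
  shows "Qmat n e q $$ (a, b) = q powr (real n * (real n + e - 3) - e) *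
     ((if 2*n - 1 - a \<le> b then (q - 1 + kdelta b (2*n - 1 - a)) * q powr (real b + e) else 0)
      + (if a = b then q ^ n * (q powr e - q) else 0))"
  using assms by (auto simp: Qmat_def Let_def kdelta_def add_ac)

lemma vvec_index:
  assumes "a < 2*n" and "t \<le> n"
  shows "vvec n e q t $ a =
    (if a < n - t then 0 else if a < n then q powr (e + real t - 1) else if a < n + t then -1 else 0)"
  using assms by (auto simp: vvec_def)

lemma Qmat_row_vvec_sum:
  fixes q e :: real
  assumes "q > 0" and "t \<le> n" and "a < 2*n"
  defines "C \<equiv> q powr (real n * (real n + e - 3) - e)"
    and "A \<equiv> q powr (e + real t - 1)" and "s \<equiv> 2*n - 1 - a"
  shows "(\<Sum>b<2*n. Qmat n e q $$ (a, b) * vvec n e q t $ b) =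
      C * A * (if s < n - t then q powr (real n + 1) - q powr (real (n - t) + 1)
               else if s < n then q powr (real n + 1) else 0)
    - C * (if s < n then q powr (real (n + t) + e) - q powr (real n + e)
           else if s < n + t then q powr (real (n + t) + e) else 0)
    - C * (if n \<le> a \<and> a < n + t then q ^ n * (q powr e - q) else 0)"
proof -
  let ?f = "\<lambda>b. Qmat n e q $$ (a, b) * vvec n e q t $ b"
  have split: "sum ?f {..<2*n} =
      sum ?f {0..<n-t} + sum ?f {n-t..<n} + sum ?f {n..<n+t} + sum ?f {n+t..<2*n}"
    using assms(2) by (simp add: lessThan_atLeast0 sum.atLeastLessThan_concat)
  have "sum ?f {0..<n-t} = 0" and "sum ?f {n+t..<2*n} = 0"
    using assms(2) by (auto intro!: sum.neutral simp: vvec_index)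
  moreover have "sum ?f {n-t..<n} = C * A *
      (\<Sum>b\<in>{n-t..<n}. if s \<le> b then (q - 1 + kdelta b s) * q powr (real b + 1) else 0)"
    unfolding sum_distrib_left
    using assms by (intro sum.cong) (auto simp: Qmat_index_left vvec_index)
  moreover have "sum ?f {n..<n+t} =
      - C * (\<Sum>b\<in>{n..<n+t}. if s \<le> b then (q - 1 + kdelta b s) * q powr (real b + e) else 0)
      - C * (\<Sum>b\<in>{n..<n+t}. if a = b then q ^ n * (q powr e - q) else 0)"
    unfolding sum_distrib_left sum_negf[symmetric] sum_subtractf[symmetric]
    using assms by (intro sum.cong) (auto simp: Qmat_index_right vvec_index algebra_simps)
  ultimately show ?thesis
    using split
    by (simp add: sum.delta' sum_telescoping_powr_tail[OF assms(1) diff_le_self]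
        sum_telescoping_powr_tail[OF assms(1) le_add1] del: of_nat_add)
qed

lemma Qmat_vvec_powr_identities:
  fixes q e :: real
  assumes "1 \<le> t" and "t \<le> n"
  defines "C \<equiv> q powr (real n * (real n + e - 3) - e)"
    and "A \<equiv> q powr (e + real t - 1)"
    and "L \<equiv> q powr (real (n - 1) * (real n - 1 + e))"
  shows "A * q powr (real n + 1) = q powr (real n + real t + e)"
    and "A * q powr (real (n - t) + 1) = q powr (real n + e)"
    and "C * q powr (real n + real t + e) = L * A"
    and "C * q powr (real n + 1) = L"
  using assms unfolding A_def C_def L_def
  by (simp_all flip: powr_add add: algebra_simps of_nat_diff)

lemma Qmat_row_vvec:
  fixes q e :: real
  assumes "q > 0" and "1 \<le> t" and "t \<le> n" and "a < 2*n"
  shows "(\<Sum>b<2*n. Qmat n e q $$ (a, b) * vvec n e q t $ b) =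
    - (q powr (real (n - 1) * (real n - 1 + e))) * vvec n e q t $ a"
proof -
  define C where "C = q powr (real n * (real n + e - 3) - e)"
  define A where "A = q powr (e + real t - 1)"
  define L where "L = q powr (real (n - 1) * (real n - 1 + e))"
  define s where "s = 2*n - 1 - a"
  note row = Qmat_row_vvec_sum[OF assms(1,3,4), of e, folded C_def A_def s_def]
  note powr_identities = Qmat_vvec_powr_identities[OF assms(2,3), of q e, folded C_def A_def L_def]
  have diagonal: "q ^ n * (q powr e - q) = q powr (real n + e) - q powr (real n + 1)"
    using assms(1) by (simp add: powr_add powr_realpow right_diff_distrib)
  have vvec: "vvec n e q t $ a =
      (if a < n - t then 0 else if a < n then A else if a < n + t then -1 else 0)"
    unfolding A_def using assms(4,3) by (rule vvec_index)
  consider "a < n - t" | "n - t \<le> a" "a < n" | "n \<le> a" "a < n + t" | "n + t \<le> a"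
    by linarith
  then show ?thesis
  proof cases
    case 1
    then have "\<not> s < n + t" "\<not> s < n" "\<not> s < n - t" "\<not> n \<le> a"
      unfolding s_def by linarith+
    with 1 show ?thesis unfolding row vvec by simp
  next
    case 2
    then have "n \<le> s" "s < n + t" unfolding s_def using assms(3) by linarith+
    with 2 show ?thesis unfolding row vvec L_def[symmetric] by (simp add: powr_identities)
  next
    case 3
    then have "n - t \<le> s" "s < n" unfolding s_def using assms(3) by linarith+
    with 3 have "(\<Sum>b<2*n. Qmat n e q $$ (a, b) * vvec n e q t $ b) =
        C * (A * q powr (real n + 1)) - C * q powr (real n + real t + e) + C * q powr (real n + 1)"
      unfolding row diagonal by (simp add: algebra_simps)
    with 3 show ?thesis unfolding vvec powr_identities(1,4) L_def[symmetric] by simp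
  next
    case 4
    then have "s < n - t" "s < n" "s < n + t" unfolding s_def using assms(2-4) by linarith+
    with 4 have "(\<Sum>b<2*n. Qmat n e q $$ (a, b) * vvec n e q t $ b) =
        C * (A * q powr (real n + 1)) - C * (A * q powr (real (n - t) + 1))
        - C * q powr (real n + real t + e) + C * q powr (real n + e)"
      unfolding row by (simp add: algebra_simps)
    with 4 show ?thesis unfolding vvec powr_identities(1,2) by simp
  qed
qed

lemma dim_row_Qmat [simp]: "dim_row (Qmat n e q) = 2*n"
  and dim_col_Qmat [simp]: "dim_col (Qmat n e q) = 2*n"
  by (simp_all add: Qmat_def)

lemma dim_vec_vvec [simp]: "dim_vec (vvec n e q t) = 2*n"
  by (simp add: vvec_def)

lemma vvec_nonzero:
  fixes q e :: real
  assumes "q > 0" and "1 \<le> t" and "t \<le> n"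
  shows "vvec n e q t \<noteq> 0\<^sub>v (2*n)"
proof
  assume zero: "vvec n e q t = 0\<^sub>v (2*n)"
  have "n - 1 < 2*n"
    using assms(2,3) by simp
  then have "vvec n e q t $ (n - 1) = 0"
    unfolding zero by simp
  moreover have "vvec n e q t $ (n - 1) = q powr (e + real t - 1)"
    using assms(2,3) by (simp add: vvec_index)
  ultimately show False
    using assms(1) by simp
qed

lemma Qmat_mult_vvec:
  fixes q e :: real
  assumes "q > 0" and "1 \<le> t" and "t \<le> n"
  shows "Qmat n e q *\<^sub>v vvec n e q t = (- (q powr (real (n - 1) * (real n - 1 + e)))) \<cdot>\<^sub>v vvec n e q t"
proof (rule eq_vecI)
  fix a
  assume "a < dim_vec ((- (q powr (real (n - 1) * (real n - 1 + e)))) \<cdot>\<^sub>v vvec n e q t)"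
  then have a: "a < 2*n"
    by simp
  have "(Qmat n e q *\<^sub>v vvec n e q t) $ a = row (Qmat n e q) a \<bullet> vvec n e q t"
    using a by simp
  also have "\<dots> = (\<Sum>b<2*n. Qmat n e q $$ (a, b) * vvec n e q t $ b)"
    unfolding scalar_prod_def lessThan_atLeast0 using a by (intro sum.cong) auto
  also have "\<dots> = - (q powr (real (n - 1) * (real n - 1 + e))) * vvec n e q t $ a"
    using assms a by (rule Qmat_row_vvec)
  also have "\<dots> = ((- (q powr (real (n - 1) * (real n - 1 + e)))) \<cdot>\<^sub>v vvec n e q t) $ a"
    using a by simp
  finally show "(Qmat n e q *\<^sub>v vvec n e q t) $ a = ((- (q powr (real (n - 1) * (real n - 1 + e)))) \<cdot>\<^sub>v vvec n e q t) $ a" .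
qed simp

lemma eigenvector_Qmat_vvec:
  fixes q e :: real
  assumes "q > 0" and "1 \<le> t" and "t \<le> n"
  shows "eigenvector (Qmat n e q) (vvec n e q t) (- (q powr (real (n - 1) * (real n - 1 + e))))"
  unfolding eigenvector_def dim_row_Qmat
  by (intro conjI carrier_vecI dim_vec_vvec vvec_nonzero[OF assms] Qmat_mult_vvec[OF assms])

theorem mainTheorem9:
  fixes n :: nat and e :: real and q :: nat and i :: nat
  assumes "n \<ge> 2"
    and "\<exists>p k. prime p \<and> k \<ge> 1 \<and> q = p ^ k"
    and "1 \<le> i" and "i \<le> n"
  shows "eigenvector (Qmat n e (real q)) (vvec n e (real q) i)
           (- (real q powr (real (n - 1) * (real n - 1 + e))))"
proof -
  from assms(2) obtain p k where "prime p" and "q = p ^ k"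
    by blast
  then have "real q > 0"
    using prime_gt_0_nat by simp
  then show ?thesis
    using assms(3,4) by (rule eigenvector_Qmat_vvec)
qed

end
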